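(* Assume the setting below (the iteration (a)–(c)), and assume that every Moore–Penrose pseudoinverse and every denominator occurring in the iteration is well defined, i.e. $\sum_{i=1}^n (W_{k})_{ij}>0$ for all $j$. Then each iteration does not increase the objective: $$L(V_{k+1},U_{k+1},\mu_{k+1})\le L(V_k,U_k,\mu_k)\qquad\text{for all }k\ge 0 .$$
   Context: Setting. Let $X=(x_{ij})$ be an $n\times p$ real matrix and $M=(m_{ij})\in\{0,1\}^{n\times p}$ a missingness indicator ($m_{ij}=0$ means $x_{ij}$ is missing; its numerical value is then arbitrary and irrelevant). Put $m_i=\sum_j m_{ij}$, assumed $\ge 1$ for every $i$, and $m=\sum_i m_i$. Fix constants $\hat\sigma_{1,j}>0$ ($j=1,\dots,p$), $\hat\sigma_2>0$ and an integer $1\le q<p$. For $0<b<c$ and $q_1,q_2>0$ with $q_1\tanh(q_2(c-b))=b$, let $d=b^2/2+(q_1/q_2)\ln\cosh(q_2(c-b))$ and define $\rho_{b,c}(z)=z^2/2$ if $|z|\le b$, $\rho_{b,c}(z)=d-(q_1/q_2)\ln\cosh(q_2(c-|z|))$ if $b\le|z|\le c$, $\rho_{b,c}(z)=d$ if $|z|\ge c$; its derivative is $\psi_{b,c}(z)=z$ for $|z|\le b$, $q_1\tanh(q_2(c-|z|))\,\mathrm{sign}(z)$ for $b\le |z|\le c$, $0$ for $|z|\ge c$. Let $\rho_1=\rho_{b_1,c_1}$ and $\rho_2=\rho_{b_2,c_2}$ be two such functions (each with its own admissible constants), $\psi_k=\rho_k'$, and weight functions $w_k(z)=\psi_k(z)/z$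 for $z\neq0$, $w_k(0)=1$. For $V\in\mathbb R^{p\times q}$ with rows $v_1^T,\dots,v_p^T$, $U\in\mathbb R^{n\times q}$ with rows $u_1^T,\dots,u_n^T$, and $\mu\in\mathbb R^p$, set $\hat x_{ij}=\mu_j+u_i^Tv_j$, $r_{ij}=x_{ij}-\hat x_{ij}$, $\mathrm{rt}_i=\sqrt{\frac1{m_i}\sum_j m_{ij}\hat\sigma_{1,j}^2\rho_1(r_{ij}/\hat\sigma_{1,j})}$ and the objective $$L(V,U,\mu)=\frac{\hat\sigma_2^2}{m}\sum_{i=1}^n m_i\,\rho_2(\mathrm{rt}_i/\hat\sigma_2).$$ Cellwise weights $w^c_{ij}=w_1(r_{ij}/\hat\sigma_{1,j})$, rowwise weights $w^r_i=w_2(\mathrm{rt}_i/\hat\sigma_2)$, and $W(V,U,\mu)=(w_{ij})$ with $w_{ij}=w^c_{ij}w^r_im_{ij}$; also $\widetilde W(V,U,\mu)=(w^c_{ij}m_{ij})$. For a nonnegative $n\times p$ matrix $W$ the weighted objective is $\widetilde L_W(V,U,\mu)=\sum_{i,j}w_{ij}(x_{ij}-\mu_j-u_i^Tv_j)^2$. For an $n\times p$ matrix $A$, $A^j$ denotes the $n\times n$ diagonal matrix with the $j$-th column of $A$ on the diagonal and $A_i$ the $p\times p$ diagonal matrix with the $i$-th row of $A$ on the diagonal; $x^j$ is the $j$-th column and $x_i$ the $i$-th row (as column vector) of $X$; ${}^\dagger$ is the Moore–Penrose inverse. Iteration. Start from any $(V_0,U_0,\mu_0)$. Given $(V_k,U_k,\mu_k)$,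 let $W_k=W(V_k,U_k,\mu_k)$, $\widetilde W_k=\widetilde W(V_k,U_k,\mu_k)$ and (a) for each $j$, the $j$-th row of $V_{k+1}$ is $\big(U_k^TW_k^jU_k\big)^\dagger U_k^TW_k^j\big(x^j-(\mu_k)_j1_n\big)$; (b) for each $i$, the $i$-th row of $U_{k+1}$ is $\big(V_{k+1}^T(\widetilde W_k)_iV_{k+1}\big)^\dagger V_{k+1}^T(\widetilde W_k)_i(x_i-\mu_k)$; (c) for each $j$, $(\mu_{k+1})_j=\dfrac{\sum_i (W_k)_{ij}\big(x_{ij}-(U_{k+1}V_{k+1}^T)_{ij}\big)}{\sum_i (W_k)_{ij}}$. *)

theory Defs
  imports "HOL-Analysis.Analysis"
begin

definition pinv :: "real^'n^'m \<Rightarrow> real^'m^'n" where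
  "pinv A = (THE G. A ** G ** A = A \<and> G ** A ** G = G \<and>
                    transpose (A ** G) = A ** G \<and> transpose (G ** A) = G ** A)"

definition diagm :: "real^'n \<Rightarrow> real^'n^'n" where
  "diagm v = (\<chi> i j. if i = j then v $ i else 0)"

definition rho_adm :: "real \<times> real \<times> real \<times> real \<Rightarrow> bool" where
  "rho_adm P = (case P of (b, c, q1, q2) \<Rightarrow>
      0 < b \<and> b < c \<and> 0 < q1 \<and> 0 < q2 \<and> q1 * tanh (q2 * (c - b)) = b)"

definition rho_fn :: "real \<times> real \<times> real \<times> real \<Rightarrow> real \<Rightarrow> real" where
  "rho_fn P z = (case P of (b, c, q1, q2) \<Rightarrow>
      (let d = b\<^sup>2 / 2 + (q1 / q2) * ln (cosh (q2 * (c - b))) in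
       if \<bar>z\<bar> \<le> b then z\<^sup>2 / 2
       else if \<bar>z\<bar> \<le> c then d - (q1 / q2) * ln (cosh (q2 * (c - \<bar>z\<bar>)))
       else d))"

definition psi_fn :: "real \<times> real \<times> real \<times> real \<Rightarrow> real \<Rightarrow> real" where
  "psi_fn P z = (case P of (b, c, q1, q2) \<Rightarrow>
       if \<bar>z\<bar> \<le> b then z
       else if \<bar>z\<bar> \<le> c then q1 * tanh (q2 * (c - \<bar>z\<bar>)) * sgn z
       else 0)"

definition w_fn :: "real \<times> real \<times> real \<times> real \<Rightarrow> real \<Rightarrow> real" where
  "w_fn P z = (if z = 0 then 1 else psi_fn P z / z)"

text \<open>Missingness indicator m_ij as 0/1 real; M$i$j = True means observed.\<close>
definition mind :: "bool^'p^'n \<Rightarrow> 'n \<Rightarrow> 'p \<Rightarrow> real" where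
  "mind M i j = (if M $ i $ j then 1 else 0)"

definition mrow :: "bool^'p^'n \<Rightarrow> 'n \<Rightarrow> real" where
  "mrow M i = (\<Sum>j\<in>UNIV. mind M i j)"

definition mtot :: "bool^'p^'n \<Rightarrow> real" where
  "mtot M = (\<Sum>i\<in>UNIV. mrow M i)"

definition resid :: "real^'p^'n \<Rightarrow> real^'q^'p \<Rightarrow> real^'q^'n \<Rightarrow> real^'p \<Rightarrow> 'n \<Rightarrow> 'p \<Rightarrow> real" where
  "resid X V U mu i j = X $ i $ j - (mu $ j + (U $ i) \<bullet> (V $ j))"

definition rt :: "real \<times> real \<times> real \<times> real \<Rightarrow> real^'p \<Rightarrow> real^'p^'n \<Rightarrow> bool^'p^'n
                   \<Rightarrow> real^'q^'p \<Rightarrow> real^'q^'n \<Rightarrow> real^'p \<Rightarrow> 'n \<Rightarrow> real" where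
  "rt P1 s1 X M V U mu i = sqrt ((1 / mrow M i) *
      (\<Sum>j\<in>UNIV. mind M i j * (s1 $ j)\<^sup>2 * rho_fn P1 (resid X V U mu i j / s1 $ j)))"

definition objL :: "real \<times> real \<times> real \<times> real \<Rightarrow> real \<times> real \<times> real \<times> real \<Rightarrow> real^'p \<Rightarrow> real
                   \<Rightarrow> real^'p^'n \<Rightarrow> bool^'p^'n \<Rightarrow> real^'q^'p \<Rightarrow> real^'q^'n \<Rightarrow> real^'p \<Rightarrow> real" where
  "objL P1 P2 s1 s2 X M V U mu = s2\<^sup>2 / mtot M *
      (\<Sum>i\<in>UNIV. mrow M i * rho_fn P2 (rt P1 s1 X M V U mu i / s2))"

definition Wmat :: "real \<times> real \<times> real \<times> real \<Rightarrow> real \<times> real \<times> real \<times> real \<Rightarrow> real^'p \<Rightarrow> real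
                   \<Rightarrow> real^'p^'n \<Rightarrow> bool^'p^'n \<Rightarrow> real^'q^'p \<Rightarrow> real^'q^'n \<Rightarrow> real^'p \<Rightarrow> real^'p^'n" where
  "Wmat P1 P2 s1 s2 X M V U mu = (\<chi> i j.
      w_fn P1 (resid X V U mu i j / s1 $ j) * w_fn P2 (rt P1 s1 X M V U mu i / s2) * mind M i j)"

definition Wtmat :: "real \<times> real \<times> real \<times> real \<Rightarrow> real^'p
                   \<Rightarrow> real^'p^'n \<Rightarrow> bool^'p^'n \<Rightarrow> real^'q^'p \<Rightarrow> real^'q^'n \<Rightarrow> real^'p \<Rightarrow> real^'p^'n" where
  "Wtmat P1 s1 X M V U mu = (\<chi> i j. w_fn P1 (resid X V U mu i j / s1 $ j) * mind M i j)"

definition step :: "real \<times> real \<times> real \<times> real \<Rightarrow> real \<times> real \<times> real \<times> real \<Rightarrow> real^'p \<Rightarrow> real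
      \<Rightarrow> real^'p^'n \<Rightarrow> bool^'p^'n
      \<Rightarrow> ((real^'q^'p) \<times> (real^'q^'n) \<times> (real^'p)) \<Rightarrow> ((real^'q^'p) \<times> (real^'q^'n) \<times> (real^'p))" where
  "step P1 P2 s1 s2 X M S =
     (let V = fst S; U = fst (snd S); mu = snd (snd S);
          W = Wmat P1 P2 s1 s2 X M V U mu;
          Wt = Wtmat P1 s1 X M V U mu;
          V' = (\<chi> j. pinv (transpose U ** diagm (column j W) ** U)
                    *v (transpose U *v (diagm (column j W) *v (column j X - vec (mu $ j)))));
          U' = (\<chi> i. pinv (transpose V' ** diagm (Wt $ i) ** V')
                    *v (transpose V' *v (diagm (Wt $ i) *v (X $ i - mu))));
          mu' = (\<chi> j. (\<Sum>i\<in>UNIV. W $ i $ j * (X $ i $ j - (U' ** transpose V') $ i $ j))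
                      / (\<Sum>i\<in>UNIV. W $ i $ j))
      in (V', U', mu'))"

definition iterate :: "real \<times> real \<times> real \<times> real \<Rightarrow> real \<times> real \<times> real \<times> real \<Rightarrow> real^'p \<Rightarrow> real
      \<Rightarrow> real^'p^'n \<Rightarrow> bool^'p^'n
      \<Rightarrow> ((real^'q^'p) \<times> (real^'q^'n) \<times> (real^'p)) \<Rightarrow> nat \<Rightarrow> ((real^'q^'p) \<times> (real^'q^'n) \<times> (real^'p))" where
  "iterate P1 P2 s1 s2 X M S0 k = (step P1 P2 s1 s2 X M ^^ k) S0"

end

theory Submission
  imports Defs
begin

text \<open>
  The iteration is a majorize--minimize scheme. Writing \<open>\<rho>(z) = h(\<bar>z\<bar>)\<close>, one has
  \<open>h'(t) = t w(t)\<close> with \<open>w\<close> antitone on \<open>[0,\<infinity>)\<close>, so \<open>\<rho>(\<surd>s)\<close> is concave in \<open>s\<close> and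
  \<open>\<rho>\<close> lies below its quadratic tangent \<open>\<rho>(z\<^sub>0) + w(z\<^sub>0)/2 (z\<^sup>2 - z\<^sub>0\<^sup>2)\<close>. Since
  \<open>rt\<^sub>i\<^sup>2\<close> is a nonnegative combination of the cellwise \<open>\<rho>\<^sub>1\<close>-values, applying this bound
  to \<open>\<rho>\<^sub>1\<close> inside and to \<open>\<rho>\<^sub>2\<close> outside shows that \<open>L(\<theta>') - L(\<theta>)\<close> is at most a
  positive multiple of \<open>L\<^sub>W(\<theta>') - L\<^sub>W(\<theta>)\<close>, the change of the weighted least-squares
  objective with weights \<open>W\<close> frozen at \<open>\<theta>\<close>. Steps (a)--(c) are exact block minimizations of
  \<open>L\<^sub>W\<close>: (a) and (b) are weighted least-squares problems solved through the normal
  equations by the pseudoinverse, and (c) is a weighted mean. In (b) the row weight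
  \<open>w\<^sup>r\<^sub>i\<close> is a common factor of row \<open>i\<close>, which is why \<open>W\<close> may be replaced by \<open>W\<close>-tilde there.
\<close>

lemma DERIV_nonneg_imp_increasing_except_finite:
  fixes f :: "real \<Rightarrow> real"
  assumes "finite S" "a \<le> b" "continuous_on {a..b} f"
    and "\<And>x. a < x \<Longrightarrow> x < b \<Longrightarrow> x \<notin> S \<Longrightarrow> \<exists>y. (f has_real_derivative y) (at x) \<and> 0 \<le> y"
  shows "f a \<le> f b"
  using assms
proof (induction S arbitrary: a b rule: finite_induct)
  case empty
  then show ?case
    by (intro DERIV_nonneg_imp_increasing_open[of a b f]) auto
next
  case (insert p S)
  show ?case
  proof (cases "a < p \<and> p < b")
    case True
    have "f a \<le> f p"
      by (rule insert.IH[of a p]) (use True insert.prems in \<open>auto elim: continuous_on_subset\<close>)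
    moreover have "f p \<le> f b"
      by (rule insert.IH[of p b]) (use True insert.prems in \<open>auto elim: continuous_on_subset\<close>)
    ultimately show ?thesis
      by simp
  next
    case False
    show ?thesis
      by (rule insert.IH[of a b]) (use False insert.prems in auto)
  qed
qed

section \<open>The functions \<open>\<rho>\<close> and \<open>w\<close>\<close>

lemma rho_fn_abs [simp]: "rho_fn P \<bar>z\<bar> = rho_fn P z"
  by (cases P) (simp add: rho_fn_def Let_def)

lemma w_fn_abs [simp]: "w_fn P \<bar>z\<bar> = w_fn P z"
  by (cases P) (auto simp: w_fn_def psi_fn_def abs_if sgn_if)

lemma w_fn_of_nonneg:
  assumes "rho_adm (b, c, q1, q2)" "0 \<le> t"
  shows "w_fn (b, c, q1, q2) t =
           (if t \<le> b then 1 else if t \<le> c then q1 * tanh (q2 * (c - t)) / t else 0)"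
  using assms by (auto simp: w_fn_def psi_fn_def rho_adm_def)

lemma w_fn_nonneg:
  assumes "rho_adm P"
  shows "0 \<le> w_fn P z"
proof -
  obtain b c q1 q2 where P: "P = (b, c, q1, q2)" by (cases P) auto
  then have "0 \<le> w_fn P \<bar>z\<bar>"
    using assms w_fn_of_nonneg[of b c q1 q2 "\<bar>z\<bar>"] by (auto simp: rho_adm_def)
  then show ?thesis by simp
qed

lemma w_fn_antimono:
  assumes "rho_adm P" "0 \<le> x" "x \<le> y"
  shows "w_fn P y \<le> w_fn P x"
proof -
  obtain b c q1 q2 where P: "P = (b, c, q1, q2)" by (cases P) auto
  have adm: "0 < b" "b < c" "0 < q1" "0 < q2" "q1 * tanh (q2 * (c - b)) = b"
    using assms(1) by (auto simp: rho_adm_def P)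
  txt \<open>The admissibility identity \<open>q1 tanh (q2 (c - b)) = b\<close> makes \<open>w\<close> continuous at \<open>b\<close>.\<close>
  have tanh_le: "q1 * tanh (q2 * (c - t)) \<le> q1 * tanh (q2 * (c - s))" if "s \<le> t" for s t
    using adm that by (intro mult_left_mono) (auto intro: mult_left_mono)
  have "q1 * tanh (q2 * (c - y)) / y \<le> 1" if "b < y" "y \<le> c"
    using tanh_le[of b y] adm that by simp
  moreover have "q1 * tanh (q2 * (c - y)) / y \<le> q1 * tanh (q2 * (c - x)) / x"
    if "b < x" "x \<le> y" "y \<le> c"
    using tanh_le[of x y] adm that by (intro frac_le) auto
  moreover have "0 \<le> q1 * tanh (q2 * (c - x)) / x" if "b < x" "x \<le> c"
    using adm that by simp
  ultimately show ?thesis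
    using assms adm unfolding P
    by (simp add: w_fn_of_nonneg[OF assms(1)[unfolded P]])
qed

lemma rho_fn_nonneg:
  assumes "rho_adm P"
  shows "0 \<le> rho_fn P z"
proof -
  obtain b c q1 q2 where P: "P = (b, c, q1, q2)" by (cases P) auto
  have adm: "0 < b" "b < c" "0 < q1" "0 < q2"
    using assms by (auto simp: rho_adm_def P)
  define d where "d = b\<^sup>2 / 2 + (q1 / q2) * ln (cosh (q2 * (c - b)))"
  have "(q1 / q2) * ln (cosh (q2 * (c - \<bar>z\<bar>))) \<le> (q1 / q2) * ln (cosh (q2 * (c - b)))"
    if "b < \<bar>z\<bar>" "\<bar>z\<bar> \<le> c"
    using that adm
    by (intro mult_left_mono) (simp_all add: cosh_real_pos cosh_real_nonneg_le_iff mult_left_mono)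
  moreover have "0 \<le> (q1 / q2) * ln (cosh (q2 * (c - b)))"
    using adm by (simp add: cosh_real_ge_1)
  ultimately have "0 \<le> d" "b < \<bar>z\<bar> \<Longrightarrow> \<bar>z\<bar> \<le> c \<Longrightarrow>
      0 \<le> d - (q1 / q2) * ln (cosh (q2 * (c - \<bar>z\<bar>)))"
    unfolding d_def using zero_le_power2[of b] by linarith+
  then show ?thesis
    unfolding rho_fn_def P prod.case Let_def d_def[symmetric] by auto
qed

lemma continuous_on_rho_fn:
  assumes "rho_adm P"
  shows "continuous_on A (rho_fn P)"
proof -
  obtain b c q1 q2 where P: "P = (b, c, q1, q2)" by (cases P) auto
  have adm: "0 < b" "b < c" "0 < q1" "0 < q2"
    using assms by (auto simp: rho_adm_def P)
  define d where "d = b\<^sup>2 / 2 + (q1 / q2) * ln (cosh (q2 * (c - b)))"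
  define f where "f t = d - (q1 / q2) * ln (cosh (q2 * (c - t)))" for t
  define h where "h t = (if t \<le> b then t\<^sup>2 / 2 else if t \<le> c then f t else d)" for t
  have "continuous_on S f" for S
    unfolding f_def by (intro continuous_intros) (auto simp: cosh_real_pos)
  then have "continuous_on UNIV h"
    unfolding h_def using adm
    by (intro continuous_on_cases_le continuous_intros) (auto simp: f_def d_def)
  then have "continuous_on A (\<lambda>z. h \<bar>z\<bar>)"
    by (rule continuous_on_compose2) (auto intro: continuous_intros)
  moreover have "rho_fn P = (\<lambda>z. h \<bar>z\<bar>)"
    by (auto simp: rho_fn_def P h_def f_def d_def Let_def)
  ultimately show ?thesis
    by simp
qed

lemma rho_fn_has_real_derivative:
  assumes "rho_adm (b, c, q1, q2)" "0 < t" "t \<noteq> b" "t \<noteq> c"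
  shows "(rho_fn (b, c, q1, q2) has_real_derivative t * w_fn (b, c, q1, q2) t) (at t)"
proof -
  let ?P = "(b, c, q1, q2)"
  have adm: "0 < b" "b < c" "0 < q1" "0 < q2"
    using assms(1) by (auto simp: rho_adm_def)
  consider "t < b" | "b < t" "t < c" | "c < t"
    using assms(3,4) by fastforce
  then show ?thesis
  proof cases
    case 1
    have "((\<lambda>s. s\<^sup>2 / 2) has_real_derivative t) (at t)"
      by (auto intro!: derivative_eq_intros)
    then have "(rho_fn ?P has_real_derivative t) (at t)"
      by (rule has_field_derivative_transform_within_open[where S = "{0<..<b}"])
        (use 1 assms in \<open>auto simp: rho_fn_def\<close>)
    then show ?thesis
      using 1 assms by (simp add: w_fn_of_nonneg)
  next
    case 2
    have "((\<lambda>s. b\<^sup>2 / 2 + (q1 / q2) * ln (cosh (q2 * (c - b))) - (q1 / q2) * ln (cosh (q2 * (c - s))))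
            has_real_derivative q1 * tanh (q2 * (c - t))) (at t)"
      using adm by (auto intro!: derivative_eq_intros simp: cosh_real_pos tanh_def field_simps)
    then have "(rho_fn ?P has_real_derivative q1 * tanh (q2 * (c - t))) (at t)"
      by (rule has_field_derivative_transform_within_open[where S = "{b<..<c}"])
        (use 2 adm in \<open>auto simp: rho_fn_def Let_def\<close>)
    then show ?thesis
      using 2 assms by (simp add: w_fn_of_nonneg)
  next
    case 3
    have "(rho_fn ?P has_real_derivative 0) (at t)"
      by (rule has_field_derivative_transform_within_open[where S = "{c<..}" and
            f = "\<lambda>_. b\<^sup>2 / 2 + (q1 / q2) * ln (cosh (q2 * (c - b)))"])
        (use 3 adm in \<open>auto simp: rho_fn_def Let_def\<close>)
    then show ?thesis
      using 3 assms adm by (simp add: w_fn_of_nonneg)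
  qed
qed

lemma rho_fn_le_quadratic_tangent:
  assumes "rho_adm P"
  shows "rho_fn P z \<le> rho_fn P z0 + w_fn P z0 / 2 * (z\<^sup>2 - z0\<^sup>2)"
proof -
  obtain b c q1 q2 where P: "P = (b, c, q1, q2)" by (cases P) auto
  define t t0 where "t = \<bar>z\<bar>" and "t0 = \<bar>z0\<bar>"
  define F where "F s = rho_fn P t0 + w_fn P t0 / 2 * (s\<^sup>2 - t0\<^sup>2) - rho_fn P s" for s
  have contF: "continuous_on A F" for A
    unfolding F_def by (intro continuous_intros continuous_on_rho_fn[OF assms])
  txt \<open>\<open>F' (s)\<close> has the sign of \<open>s - t0\<close> because \<open>w\<close> is antitone, so \<open>F\<close> is minimal at \<open>t0\<close>.\<close>
  have F': "(F has_real_derivative s * (w_fn P t0 - w_fn P s)) (at s)"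
    if "0 < s" "s \<notin> {b, c}" for s
    unfolding F_def using that rho_fn_has_real_derivative[OF assms[unfolded P], of s]
    by (auto intro!: derivative_eq_intros simp: P algebra_simps)
  have "F t0 \<le> F t" if "t0 \<le> t"
  proof (rule DERIV_nonneg_imp_increasing_except_finite[of "{b, c}" t0 t F])
    fix s assume s: "t0 < s" "s < t" "s \<notin> {b, c}"
    have "0 \<le> t0" "0 < s"
      using s by (auto simp: t0_def)
    then have "0 \<le> s * (w_fn P t0 - w_fn P s)"
      using w_fn_antimono[OF assms, of t0 s] s by simp
    then show "\<exists>y. (F has_real_derivative y) (at s) \<and> 0 \<le> y"
      using F'[of s] s \<open>0 < s\<close> by blast
  qed (use that contF in auto)
  moreover have "- F t \<le> - F t0" if "t \<le> t0"
  proof (rule DERIV_nonneg_imp_increasing_except_finite[of "{b, c}" t t0 "\<lambda>s. - F s"])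
    fix s assume s: "t < s" "s < t0" "s \<notin> {b, c}"
    have "0 < s"
      using s by (auto simp: t_def)
    then have "0 \<le> - (s * (w_fn P t0 - w_fn P s))"
      using w_fn_antimono[OF assms, of s t0] s by (simp add: mult_nonneg_nonpos)
    then show "\<exists>y. ((\<lambda>s. - F s) has_real_derivative y) (at s) \<and> 0 \<le> y"
      using DERIV_minus[OF F'[of s]] s \<open>0 < s\<close> by blast
  qed (use that contF in \<open>auto intro: continuous_intros\<close>)
  moreover have "F t0 = 0"
    by (simp add: F_def)
  ultimately have "0 \<le> F t"
    by linarith
  then show ?thesis
    by (simp add: F_def t_def t0_def)
qed

section \<open>Moore--Penrose pseudoinverse of a symmetric matrix\<close>

lemma inner_matrix_vector_transpose:
  fixes A :: "real^'n^'m"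
  shows "(A *v x) \<bullet> y = x \<bullet> (transpose A *v y)"
  using dot_lmul_matrix[of y A x] by (simp add: inner_commute)

lemma inner_symmetric_matrix:
  fixes A :: "real^'n^'n"
  assumes "transpose A = A"
  shows "(A *v x) \<bullet> y = x \<bullet> (A *v y)"
  using inner_matrix_vector_transpose[of A x y] assms by simp

lemma transpose_eq_if_inner_symmetric:
  fixes A :: "real^'n^'n"
  assumes "\<And>x y. (A *v x) \<bullet> y = x \<bullet> (A *v y)"
  shows "transpose A = A"
proof -
  have "(transpose A *v x) \<bullet> y = (A *v x) \<bullet> y" for x y
    using inner_matrix_vector_transpose[of "transpose A" x y] assms[of x y]
    by (simp add: inner_commute)
  then have "transpose A *v x = A *v x" for x
    by (metis vector_eq_rdot)
  then show ?thesis
    by (simp add: matrix_eq)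
qed

lemma penrose_conditions_unique:
  fixes A :: "real^'n^'m" and G H :: "real^'m^'n"
  assumes G: "A ** G ** A = A" "G ** A ** G = G"
      "transpose (A ** G) = A ** G" "transpose (G ** A) = G ** A"
  assumes H: "A ** H ** A = A" "H ** A ** H = H"
      "transpose (A ** H) = A ** H" "transpose (H ** A) = H ** A"
  shows "G = H"
proof -
  have AG_AH: "A ** G = A ** H"
  proof -
    have "A ** G = ((A ** H) ** A) ** G"
      using H(1) by simp
    also have "\<dots> = transpose (A ** H) ** transpose (A ** G)"
      using G(3) H(3) by (simp add: matrix_mul_assoc)
    also have "\<dots> = transpose (((A ** G) ** A) ** H)"
      by (simp add: matrix_transpose_mul matrix_mul_assoc)
    also have "\<dots> = A ** H"
      using G(1) H(3) by simp
    finally show ?thesis .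
  qed
  have GA_HA: "G ** A = H ** A"
  proof -
    have "G ** A = G ** ((A ** H) ** A)"
      using H(1) by simp
    also have "\<dots> = transpose (G ** A) ** transpose (H ** A)"
      using G(4) H(4) by (simp add: matrix_mul_assoc)
    also have "\<dots> = transpose (H ** ((A ** G) ** A))"
      by (simp add: matrix_transpose_mul matrix_mul_assoc)
    also have "\<dots> = H ** A"
      using G(1) H(4) by simp
    finally show ?thesis .
  qed
  have "G = G ** (A ** G)"
    using G(2) by (simp add: matrix_mul_assoc)
  also have "\<dots> = (G ** A) ** H"
    by (simp only: AG_AH matrix_mul_assoc)
  also have "\<dots> = (H ** A) ** H"
    by (simp only: GA_HA)
  also have "\<dots> = H"
    using H(2) by simp
  finally show ?thesis .
qed

lemma orthogonal_projection_exists: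
  fixes S :: "'a::euclidean_space set"
  assumes S: "subspace S"
  obtains p where "linear p" "\<And>x. p x \<in> S" "\<And>x y. y \<in> S \<Longrightarrow> (x - p x) \<bullet> y = 0"
    "\<And>y. y \<in> S \<Longrightarrow> p y = y" "\<And>x y. p x \<bullet> y = x \<bullet> p y"
proof -
  obtain B where B: "B \<subseteq> S" "pairwise orthogonal B" "span B = S"
    using orthogonal_basis_subspace[OF S] by metis
  define p where "p x = (\<Sum>b\<in>B. (b \<bullet> x / (b \<bullet> b)) *\<^sub>R b)" for x
  have p_in: "p x \<in> S" for x
    unfolding p_def B(3)[symmetric] by (intro span_sum span_mul span_base)
  have p_orth: "(x - p x) \<bullet> y = 0" if "y \<in> S" for x y
    using Gram_Schmidt_step[OF B(2), of y x] that B(3)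
    by (simp add: p_def orthogonal_def inner_commute)
  show thesis
  proof
    show "linear p"
      by (rule linearI)
        (simp_all add: p_def inner_add_right add_divide_distrib scaleR_add_left sum.distrib
          scaleR_sum_right)
    show "p y = y" if "y \<in> S" for y
    proof -
      have "p y - y \<in> S"
        using S p_in that by (rule subspace_diff)
      then have "(y - p y) \<bullet> (y - p y) = 0"
        using p_orth[of "p y - y" y] by (simp add: inner_diff_right)
      then show ?thesis
        by simp
    qed
    show "p x \<bullet> y = x \<bullet> p y" for x y
      using p_in p_orth[of "p y" x] p_orth[of "p x" y]
      by (simp add: inner_diff_left inner_diff_right inner_commute)
  qed (use p_in p_orth in auto)
qed

lemma symmetric_matrix_kernel_if_orthogonal_range:
  fixes A :: "real^'n^'n"
  assumes "transpose A = A" "\<And>u. z \<bullet> (A *v u) = 0"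
  shows "A *v z = 0"
  using inner_symmetric_matrix[OF assms(1), of z "A *v z"] assms(2)[of "A *v z"] by simp

lemma symmetric_matrix_inj_on_range:
  fixes A :: "real^'n^'n"
  assumes sym: "transpose A = A"
  shows "inj_on ((*v) A) (range ((*v) A))"
proof -
  have "v = 0" if v: "v \<in> range ((*v) A)" "A *v v = 0" for v
  proof -
    obtain u where "v = A *v u"
      using v(1) by blast
    then have "v \<bullet> v = u \<bullet> (A *v v)"
      using inner_symmetric_matrix[OF sym] by simp
    then show ?thesis
      using v(2) by simp
  qed
  then show ?thesis
    by (simp add: linear_inj_on_iff_eq_0 linear_subspace_image)
qed

text \<open>
  With \<open>p\<close> the orthogonal projection onto the range \<open>R\<close> of \<open>A\<close> and \<open>g\<close> the inverse of
  \<open>A\<close> on \<open>R\<close>, the matrix of \<open>g \<circ> p\<close> satisfies \<open>AG = GA = p\<close>.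
\<close>

lemma penrose_conditions_exist_if_symmetric:
  fixes A :: "real^'n^'n"
  assumes sym: "transpose A = A"
  shows "\<exists>G. A ** G ** A = A \<and> G ** A ** G = G \<and>
             transpose (A ** G) = A ** G \<and> transpose (G ** A) = G ** A"
proof -
  let ?R = "range ((*v) A)"
  have R: "subspace ?R"
    by (intro linear_subspace_image subspace_UNIV) simp
  obtain p where p: "linear p" "\<And>x. p x \<in> ?R" "\<And>x y. y \<in> ?R \<Longrightarrow> (x - p x) \<bullet> y = 0"
      and p_id: "\<And>y. y \<in> ?R \<Longrightarrow> p y = y" and p_sym: "\<And>x y. p x \<bullet> y = x \<bullet> p y"
    using orthogonal_projection_exists[OF R] by blast
  have A_p: "A *v p x = A *v x" for x
    using symmetric_matrix_kernel_if_orthogonal_range[OF sym, of "x - p x"] p(3)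
    by (simp add: matrix_vector_mult_diff_distrib)
  obtain g where g: "range g \<subseteq> ?R" "linear g" "\<And>x. x \<in> ?R \<Longrightarrow> g (A *v x) = x"
    using linear_inj_on_left_inverse[of "(*v) A" ?R] symmetric_matrix_inj_on_range[OF sym]
    unfolding span_eq_iff[THEN iffD2, OF R] by blast
  define G where "G = matrix (g \<circ> p)"
  have G: "G *v x = g (p x)" for x
    unfolding G_def using linear_compose[OF p(1) g(2)] by (simp add: matrix_works)
  have AG: "A *v (G *v x) = p x" for x
  proof -
    obtain u where "p x = A *v u"
      using p(2) by blast
    then show ?thesis
      using A_p[of u] g(3)[of "p u"] p(2)[of u] by (simp add: G)
  qed
  have GA: "G *v (A *v x) = p x" for x
    using A_p[of x] g(3)[of "p x"] p(2)[of x] p_id[of "A *v x"] by (simp add: G)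
  have "A ** G ** A = A"
    by (simp add: matrix_eq matrix_vector_mul_assoc[symmetric] AG p_id)
  moreover have "G ** A ** G = G"
  proof -
    have "G *v (A *v (G *v x)) = G *v x" for x
      unfolding GA using g(1) by (auto simp: G intro!: p_id)
    then show ?thesis
      by (simp add: matrix_eq matrix_vector_mul_assoc[symmetric])
  qed
  moreover have "transpose (A ** G) = A ** G"
    by (rule transpose_eq_if_inner_symmetric) (simp add: matrix_vector_mul_assoc[symmetric] AG p_sym)
  moreover have "transpose (G ** A) = G ** A"
    by (rule transpose_eq_if_inner_symmetric) (simp add: matrix_vector_mul_assoc[symmetric] GA p_sym)
  ultimately show ?thesis
    by blast
qed

lemma pinv_penrose_conditions:
  fixes A :: "real^'n^'n"
  assumes "transpose A = A"
  shows "A ** pinv A ** A = A \<and> pinv A ** A ** pinv A = pinv A \<and>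
         transpose (A ** pinv A) = A ** pinv A \<and> transpose (pinv A ** A) = pinv A ** A"
  unfolding pinv_def
  by (rule theI') (use penrose_conditions_exist_if_symmetric[OF assms] penrose_conditions_unique in blast)

lemma pinv_mult_eq_if_orthogonal_kernel:
  fixes A :: "real^'n^'n"
  assumes sym: "transpose A = A" and b: "\<And>z. A *v z = 0 \<Longrightarrow> b \<bullet> z = 0"
  shows "A *v (pinv A *v b) = b"
proof -
  define G where "G = pinv A"
  define z where "z = b - A *v (G *v b)"
  have z_orth: "z \<bullet> (A *v u) = 0" for u
  proof -
    have "(A *v (G *v b)) \<bullet> (A *v u) = ((A ** G) *v b) \<bullet> (A *v u)"
      by (simp only: matrix_vector_mul_assoc)
    also have "\<dots> = b \<bullet> (transpose (A ** G) *v (A *v u))"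
      by (rule inner_matrix_vector_transpose)
    also have "\<dots> = b \<bullet> ((A ** G ** A) *v u)"
      using pinv_penrose_conditions[OF sym] by (simp only: G_def matrix_vector_mul_assoc)
    also have "\<dots> = b \<bullet> (A *v u)"
      using pinv_penrose_conditions[OF sym] by (simp add: G_def)
    finally show ?thesis
      by (simp add: z_def inner_diff_left)
  qed
  have Az: "A *v z = 0"
    using sym z_orth by (rule symmetric_matrix_kernel_if_orthogonal_range)
  have "(A *v (G *v b)) \<bullet> z = 0"
    using inner_symmetric_matrix[OF sym] Az by simp
  then have "z \<bullet> z = 0"
    using b[OF Az] by (simp add: z_def inner_diff_left)
  then show ?thesis
    by (simp add: z_def G_def)
qed

section \<open>Weighted least squares\<close>

lemma diagm_mult_vector_nth [simp]: "(diagm w *v v) $ i = w $ i * v $ i"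
proof -
  have "(diagm w *v v) $ i = (\<Sum>j\<in>UNIV. (if i = j then w $ i else 0) * v $ j)"
    by (simp add: diagm_def matrix_vector_mult_def)
  also have "\<dots> = (\<Sum>j\<in>UNIV. if i = j then w $ i * v $ j else 0)"
    by (rule sum.cong) auto
  finally show ?thesis
    by simp
qed

lemma transpose_diagm [simp]: "transpose (diagm w) = diagm w"
  by (simp add: diagm_def transpose_def vec_eq_iff)

lemma inner_diagm: "u \<bullet> (diagm w *v v) = (\<Sum>i\<in>UNIV. w $ i * u $ i * v $ i)"
  by (simp add: inner_vec_def mult_ac)

lemma weighted_lsq_le_if_normal_equations:
  fixes Z :: "real^'q^'r" and w y :: "real^'r"
  assumes w: "\<forall>i. 0 \<le> w $ i" and normal: "transpose Z *v (diagm w *v (y - Z *v x0)) = 0"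
  shows "(\<Sum>i\<in>UNIV. w $ i * (y $ i - Z $ i \<bullet> x0)\<^sup>2) \<le> (\<Sum>i\<in>UNIV. w $ i * (y $ i - Z $ i \<bullet> x)\<^sup>2)"
proof -
  define e where "e = y - Z *v x0"
  define d where "d = x - x0"
  have cross: "(\<Sum>i\<in>UNIV. w $ i * e $ i * (Z *v d) $ i) = 0"
  proof -
    have "(\<Sum>i\<in>UNIV. w $ i * e $ i * (Z *v d) $ i) = (Z *v d) \<bullet> (diagm w *v e)"
      by (simp add: inner_diagm mult_ac)
    also have "\<dots> = d \<bullet> (transpose Z *v (diagm w *v e))"
      by (rule inner_matrix_vector_transpose)
    finally show ?thesis
      using normal by (simp add: e_def)
  qed
  have "y $ i - Z $ i \<bullet> x = e $ i - (Z *v d) $ i" for i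
    by (simp add: e_def d_def matrix_vector_mul_component inner_diff_right)
  then have "(\<Sum>i\<in>UNIV. w $ i * (y $ i - Z $ i \<bullet> x)\<^sup>2)
      = (\<Sum>i\<in>UNIV. w $ i * (e $ i - (Z *v d) $ i)\<^sup>2)"
    by simp
  also have "\<dots> = (\<Sum>i\<in>UNIV. w $ i * (e $ i)\<^sup>2) - 2 * (\<Sum>i\<in>UNIV. w $ i * e $ i * (Z *v d) $ i)
        + (\<Sum>i\<in>UNIV. w $ i * ((Z *v d) $ i)\<^sup>2)"
    by (simp add: power2_eq_square algebra_simps sum.distrib sum_subtractf sum_distrib_left)
  also have "\<dots> \<ge> (\<Sum>i\<in>UNIV. w $ i * (e $ i)\<^sup>2)"
    using cross w by (simp add: sum_nonneg)
  finally show ?thesis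
    by (simp add: e_def matrix_vector_mul_component)
qed

lemma normal_equations_rhs_orthogonal_kernel:
  fixes Z :: "real^'q^'r" and w y :: "real^'r"
  assumes w: "\<forall>i. 0 \<le> w $ i" and z: "(transpose Z ** diagm w ** Z) *v z = 0"
  shows "(transpose Z *v (diagm w *v y)) \<bullet> z = 0"
proof -
  have "(\<Sum>i\<in>UNIV. w $ i * ((Z *v z) $ i)\<^sup>2) = (Z *v z) \<bullet> (diagm w *v (Z *v z))"
    by (simp add: inner_diagm power2_eq_square mult_ac)
  also have "\<dots> = z \<bullet> ((transpose Z ** diagm w ** Z) *v z)"
    by (simp only: inner_matrix_vector_transpose matrix_vector_mul_assoc matrix_mul_assoc
        matrix_transpose_mul transpose_diagm)
  finally have "(\<Sum>i\<in>UNIV. w $ i * ((Z *v z) $ i)\<^sup>2) = 0"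
    using z by simp
  then have "w $ i * ((Z *v z) $ i)\<^sup>2 = 0" for i
    using w by (simp add: sum_nonneg_eq_0_iff)
  then have wZz: "w $ i * (Z *v z) $ i = 0" for i
    by (metis mult_eq_0_iff zero_eq_power2)
  have "(transpose Z *v (diagm w *v y)) \<bullet> z = (diagm w *v y) \<bullet> (Z *v z)"
    by (metis inner_commute inner_matrix_vector_transpose)
  also have "\<dots> = 0"
    by (simp add: inner_commute[of _ "Z *v z"] inner_diagm wZz mult.commute[of _ "y $ _"]
        mult.assoc[symmetric])
  finally show ?thesis .
qed

lemma weighted_lsq_pinv_le:
  fixes Z :: "real^'q^'r" and w y :: "real^'r"
  assumes w: "\<forall>i. 0 \<le> w $ i"
  defines "x0 \<equiv> pinv (transpose Z ** diagm w ** Z) *v (transpose Z *v (diagm w *v y))"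
  shows "(\<Sum>i\<in>UNIV. w $ i * (y $ i - Z $ i \<bullet> x0)\<^sup>2) \<le> (\<Sum>i\<in>UNIV. w $ i * (y $ i - Z $ i \<bullet> x)\<^sup>2)"
proof (rule weighted_lsq_le_if_normal_equations[OF w])
  let ?A = "transpose Z ** diagm w ** Z"
  have "transpose ?A = ?A"
    by (simp add: matrix_transpose_mul matrix_mul_assoc)
  then have "?A *v x0 = transpose Z *v (diagm w *v y)"
    unfolding x0_def using normal_equations_rhs_orthogonal_kernel[OF w]
    by (rule pinv_mult_eq_if_orthogonal_kernel)
  then show "transpose Z *v (diagm w *v (y - Z *v x0)) = 0"
    by (simp add: matrix_vector_mult_diff_distrib matrix_vector_mul_assoc matrix_mul_assoc)
qed

section \<open>Majorization of the objective\<close>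

lemma rho_sqrt_sum_le_quadratic_tangent:
  fixes a s r r' :: "'j \<Rightarrow> real" and J :: "'j set"
  assumes adm1: "rho_adm P1" and adm2: "rho_adm P2"
    and s: "\<forall>j\<in>J. 0 < s j" and s2: "0 < s2" and a: "\<forall>j\<in>J. 0 \<le> a j" and c: "0 \<le> c"
  defines "T \<equiv> \<lambda>r. c * (\<Sum>j\<in>J. a j * (s j)\<^sup>2 * rho_fn P1 (r j / s j))"
  shows "rho_fn P2 (sqrt (T r') / s2) \<le> rho_fn P2 (sqrt (T r) / s2)
           + w_fn P2 (sqrt (T r) / s2)
             * (c * (\<Sum>j\<in>J. a j * w_fn P1 (r j / s j) * ((r' j)\<^sup>2 - (r j)\<^sup>2))) / (4 * s2\<^sup>2)"
proof -
  define \<Delta> where "\<Delta> = c * (\<Sum>j\<in>J. a j * w_fn P1 (r j / s j) * ((r' j)\<^sup>2 - (r j)\<^sup>2))"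
  have T_nonneg: "0 \<le> T q" for q
    unfolding T_def using a c
    by (intro mult_nonneg_nonneg sum_nonneg) (auto intro: rho_fn_nonneg[OF adm1])
  have cell: "a j * (s j)\<^sup>2 * rho_fn P1 (r' j / s j)
      \<le> a j * (s j)\<^sup>2 * rho_fn P1 (r j / s j) + a j * w_fn P1 (r j / s j) / 2 * ((r' j)\<^sup>2 - (r j)\<^sup>2)"
    if "j \<in> J" for j
  proof -
    have "a j * (s j)\<^sup>2 * rho_fn P1 (r' j / s j) \<le> a j * (s j)\<^sup>2 * (rho_fn P1 (r j / s j)
        + w_fn P1 (r j / s j) / 2 * ((r' j / s j)\<^sup>2 - (r j / s j)\<^sup>2))"
      using a that by (intro mult_left_mono rho_fn_le_quadratic_tangent[OF adm1]) auto
    also have "\<dots> = a j * (s j)\<^sup>2 * rho_fn P1 (r j / s j)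
        + a j * w_fn P1 (r j / s j) / 2 * ((r' j)\<^sup>2 - (r j)\<^sup>2)"
    proof -
      have "s j \<noteq> 0"
        using s that by auto
      then show ?thesis
        by (simp add: field_simps power2_eq_square)
    qed
    finally show ?thesis .
  qed
  have "T r' \<le> T r + \<Delta> / 2"
  proof -
    have "(\<Sum>j\<in>J. a j * (s j)\<^sup>2 * rho_fn P1 (r' j / s j))
        \<le> (\<Sum>j\<in>J. a j * (s j)\<^sup>2 * rho_fn P1 (r j / s j) + a j * w_fn P1 (r j / s j) / 2 * ((r' j)\<^sup>2 - (r j)\<^sup>2))"
      by (rule sum_mono) (rule cell)
    also have "\<dots> = (\<Sum>j\<in>J. a j * (s j)\<^sup>2 * rho_fn P1 (r j / s j))
        + (\<Sum>j\<in>J. a j * w_fn P1 (r j / s j) * ((r' j)\<^sup>2 - (r j)\<^sup>2)) / 2"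
      by (simp add: sum.distrib sum_divide_distrib)
    finally have "(\<Sum>j\<in>J. a j * (s j)\<^sup>2 * rho_fn P1 (r' j / s j))
        \<le> (\<Sum>j\<in>J. a j * (s j)\<^sup>2 * rho_fn P1 (r j / s j))
          + (\<Sum>j\<in>J. a j * w_fn P1 (r j / s j) * ((r' j)\<^sup>2 - (r j)\<^sup>2)) / 2" .
    from mult_left_mono[OF this c] show ?thesis
      unfolding T_def \<Delta>_def by (simp add: distrib_left)
  qed
  then have "(T r' - T r) / s2\<^sup>2 \<le> (\<Delta> / 2) / s2\<^sup>2"
    by (intro divide_right_mono) auto
  then have "(sqrt (T r') / s2)\<^sup>2 - (sqrt (T r) / s2)\<^sup>2 \<le> \<Delta> / (2 * s2\<^sup>2)"
    using T_nonneg by (simp add: power_divide diff_divide_distrib)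
  then have "w_fn P2 (sqrt (T r) / s2) / 2 * ((sqrt (T r') / s2)\<^sup>2 - (sqrt (T r) / s2)\<^sup>2)
      \<le> w_fn P2 (sqrt (T r) / s2) * \<Delta> / (4 * s2\<^sup>2)"
    using w_fn_nonneg[OF adm2, of "sqrt (T r) / s2"]
    by (auto dest: mult_left_mono[where c = "w_fn P2 (sqrt (T r) / s2) / 2"])
  then show ?thesis
    using rho_fn_le_quadratic_tangent[OF adm2, of "sqrt (T r') / s2" "sqrt (T r) / s2"]
    unfolding \<Delta>_def[symmetric] by linarith
qed

definition wlsq :: "real^'p^'n \<Rightarrow> real^'p^'n \<Rightarrow> real^'q^'p \<Rightarrow> real^'q^'n \<Rightarrow> real^'p \<Rightarrow> real"
  where "wlsq W X V U mu = (\<Sum>i\<in>UNIV. \<Sum>j\<in>UNIV. W $ i $ j * (resid X V U mu i j)\<^sup>2)"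

lemma mrow_pos:
  assumes "\<exists>j. M $ i $ j"
  shows "0 < mrow M i"
proof -
  obtain j where "M $ i $ j"
    using assms by blast
  then have "1 \<le> mrow M i"
    unfolding mrow_def using member_le_sum[of j UNIV "mind M i"] by (simp add: mind_def)
  then show ?thesis
    by simp
qed

lemma objL_le_if_wlsq_le:
  fixes X :: "real^'p^'n" and M :: "bool^'p^'n"
    and V V' :: "real^'q^'p" and U U' :: "real^'q^'n" and mu mu' :: "real^'p"
  assumes adm1: "rho_adm P1" and adm2: "rho_adm P2"
    and s1: "\<forall>j. 0 < s1 $ j" and s2: "0 < s2" and rows: "\<forall>i. \<exists>j. M $ i $ j"
    and le: "wlsq (Wmat P1 P2 s1 s2 X M V U mu) X V' U' mu' \<le> wlsq (Wmat P1 P2 s1 s2 X M V U mu) X V U mu"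
  shows "objL P1 P2 s1 s2 X M V' U' mu' \<le> objL P1 P2 s1 s2 X M V U mu"
proof -
  define W where "W = Wmat P1 P2 s1 s2 X M V U mu"
  define r r' where "r i j = resid X V U mu i j" and "r' i j = resid X V' U' mu' i j" for i j
  define D where "D i = (\<Sum>j\<in>UNIV. W $ i $ j * ((r' i j)\<^sup>2 - (r i j)\<^sup>2))" for i
  have row: "mrow M i * rho_fn P2 (rt P1 s1 X M V' U' mu' i / s2)
      \<le> mrow M i * rho_fn P2 (rt P1 s1 X M V U mu i / s2) + D i / (4 * s2\<^sup>2)" for i
  proof -
    have m: "0 < mrow M i"
      using rows mrow_pos by blast
    have "rho_fn P2 (rt P1 s1 X M V' U' mu' i / s2) \<le> rho_fn P2 (rt P1 s1 X M V U mu i / s2)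
        + w_fn P2 (rt P1 s1 X M V U mu i / s2)
          * (1 / mrow M i * (\<Sum>j\<in>UNIV. mind M i j * w_fn P1 (r i j / s1 $ j) * ((r' i j)\<^sup>2 - (r i j)\<^sup>2)))
          / (4 * s2\<^sup>2)"
      unfolding rt_def r_def r'_def using adm1 adm2 s1 s2 m
      by (intro rho_sqrt_sum_le_quadratic_tangent) (auto simp: mind_def)
    also have "\<dots> = rho_fn P2 (rt P1 s1 X M V U mu i / s2) + D i / (4 * s2\<^sup>2) / mrow M i"
      by (simp add: D_def W_def Wmat_def r_def sum_distrib_left sum_divide_distrib mult_ac)
    finally have "mrow M i * rho_fn P2 (rt P1 s1 X M V' U' mu' i / s2)
        \<le> mrow M i * (rho_fn P2 (rt P1 s1 X M V U mu i / s2) + D i / (4 * s2\<^sup>2) / mrow M i)"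
      using m by (intro mult_left_mono) auto
    then show ?thesis
      using m by (simp add: distrib_left)
  qed
  have D_nonpos: "(\<Sum>i\<in>UNIV. D i) \<le> 0"
    using le by (simp add: D_def W_def wlsq_def r_def r'_def right_diff_distrib sum_subtractf)
  have "(\<Sum>i\<in>UNIV. mrow M i * rho_fn P2 (rt P1 s1 X M V' U' mu' i / s2))
      \<le> (\<Sum>i\<in>UNIV. mrow M i * rho_fn P2 (rt P1 s1 X M V U mu i / s2) + D i / (4 * s2\<^sup>2))"
    by (rule sum_mono) (rule row)
  also have "\<dots> = (\<Sum>i\<in>UNIV. mrow M i * rho_fn P2 (rt P1 s1 X M V U mu i / s2))
      + (\<Sum>i\<in>UNIV. D i) / (4 * s2\<^sup>2)"
    by (simp add: sum.distrib sum_divide_distrib)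
  also have "\<dots> \<le> (\<Sum>i\<in>UNIV. mrow M i * rho_fn P2 (rt P1 s1 X M V U mu i / s2))"
    using D_nonpos s2 by (simp add: divide_nonpos_pos)
  finally have "(\<Sum>i\<in>UNIV. mrow M i * rho_fn P2 (rt P1 s1 X M V' U' mu' i / s2))
      \<le> (\<Sum>i\<in>UNIV. mrow M i * rho_fn P2 (rt P1 s1 X M V U mu i / s2))" .
  moreover have "0 \<le> mtot M"
    unfolding mtot_def mrow_def mind_def by (intro sum_nonneg) auto
  ultimately show ?thesis
    unfolding objL_def by (intro mult_left_mono) auto
qed

section \<open>Descent of the block updates\<close>

lemma weighted_mean_le:
  fixes w a :: "'i \<Rightarrow> real"
  assumes "finite I" "\<forall>i\<in>I. 0 \<le> w i" "0 < sum w I"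
  shows "(\<Sum>i\<in>I. w i * (a i - (\<Sum>k\<in>I. w k * a k) / sum w I)\<^sup>2) \<le> (\<Sum>i\<in>I. w i * (a i - m)\<^sup>2)"
proof -
  define \<mu> where "\<mu> = (\<Sum>k\<in>I. w k * a k) / sum w I"
  have "(\<Sum>i\<in>I. w i * (a i - \<mu>)) = (\<Sum>i\<in>I. w i * a i) - \<mu> * sum w I"
    by (simp add: right_diff_distrib sum_subtractf sum_distrib_left mult.commute)
  then have centered: "(\<Sum>i\<in>I. w i * (a i - \<mu>)) = 0"
    using assms(3) by (simp add: \<mu>_def)
  have "(\<Sum>i\<in>I. w i * (a i - m)\<^sup>2)
      = (\<Sum>i\<in>I. w i * (a i - \<mu>)\<^sup>2 + 2 * (\<mu> - m) * (w i * (a i - \<mu>)) + (\<mu> - m)\<^sup>2 * w i)"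
    by (rule sum.cong) (simp_all add: power2_eq_square algebra_simps)
  also have "\<dots> = (\<Sum>i\<in>I. w i * (a i - \<mu>)\<^sup>2) + (\<mu> - m)\<^sup>2 * sum w I"
    by (simp add: sum.distrib sum_distrib_left[symmetric] centered)
  also have "\<dots> \<ge> (\<Sum>i\<in>I. w i * (a i - \<mu>)\<^sup>2)"
    using assms(3) by simp
  finally show ?thesis
    by (simp add: \<mu>_def)
qed

lemma wlsq_update_V_le:
  fixes W X :: "real^'p^'n" and V :: "real^'q^'p" and U :: "real^'q^'n" and mu :: "real^'p"
  assumes W: "\<forall>i j. 0 \<le> W $ i $ j"
  defines "V' \<equiv> \<chi> j. pinv (transpose U ** diagm (column j W) ** U)
                   *v (transpose U *v (diagm (column j W) *v (column j X - vec (mu $ j))))"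
  shows "wlsq W X V' U mu \<le> wlsq W X V U mu"
proof -
  have "(\<Sum>i\<in>UNIV. W $ i $ j * (resid X V' U mu i j)\<^sup>2) \<le> (\<Sum>i\<in>UNIV. W $ i $ j * (resid X V U mu i j)\<^sup>2)"
    for j
    using weighted_lsq_pinv_le[where w = "column j W" and Z = U and y = "column j X - vec (mu $ j)" and x = "V $ j"] W
    by (simp add: V'_def column_def resid_def algebra_simps)
  then show ?thesis
    unfolding wlsq_def by (subst (1 2) sum.swap) (rule sum_mono)
qed

lemma wlsq_update_U_le:
  fixes W Wt X :: "real^'p^'n" and V :: "real^'q^'p" and U :: "real^'q^'n" and mu :: "real^'p"
  assumes Wt: "\<forall>i j. 0 \<le> Wt $ i $ j" and wr: "\<forall>i. 0 \<le> wr i"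
    and W: "\<forall>i j. W $ i $ j = wr i * Wt $ i $ j"
  defines "U' \<equiv> \<chi> i. pinv (transpose V ** diagm (Wt $ i) ** V)
                   *v (transpose V *v (diagm (Wt $ i) *v (X $ i - mu)))"
  shows "wlsq W X V U' mu \<le> wlsq W X V U mu"
proof -
  have "(\<Sum>j\<in>UNIV. Wt $ i $ j * (resid X V U' mu i j)\<^sup>2) \<le> (\<Sum>j\<in>UNIV. Wt $ i $ j * (resid X V U mu i j)\<^sup>2)"
    for i
    using weighted_lsq_pinv_le[where w = "Wt $ i" and Z = V and y = "X $ i - mu" and x = "U $ i"] Wt
    by (simp add: U'_def resid_def algebra_simps inner_commute)
  then have "wr i * (\<Sum>j\<in>UNIV. Wt $ i $ j * (resid X V U' mu i j)\<^sup>2)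
      \<le> wr i * (\<Sum>j\<in>UNIV. Wt $ i $ j * (resid X V U mu i j)\<^sup>2)" for i
    using wr by (simp add: mult_left_mono)
  then have "(\<Sum>j\<in>UNIV. W $ i $ j * (resid X V U' mu i j)\<^sup>2) \<le> (\<Sum>j\<in>UNIV. W $ i $ j * (resid X V U mu i j)\<^sup>2)"
    for i
    by (simp add: W sum_distrib_left mult.assoc)
  then show ?thesis
    unfolding wlsq_def by (rule sum_mono)
qed

lemma wlsq_update_mu_le:
  fixes W X :: "real^'p^'n" and V :: "real^'q^'p" and U :: "real^'q^'n" and mu :: "real^'p"
  assumes W: "\<forall>i j. 0 \<le> W $ i $ j" and den: "\<forall>j. 0 < (\<Sum>i\<in>UNIV. W $ i $ j)"
  defines "mu' \<equiv> \<chi> j. (\<Sum>i\<in>UNIV. W $ i $ j * (X $ i $ j - (U ** transpose V) $ i $ j))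
                      / (\<Sum>i\<in>UNIV. W $ i $ j)"
  shows "wlsq W X V U mu' \<le> wlsq W X V U mu"
proof -
  have UV: "(U ** transpose V) $ i $ j = U $ i \<bullet> V $ j" for i j
    by (simp add: matrix_matrix_mult_def transpose_def inner_vec_def)
  have "(\<Sum>i\<in>UNIV. W $ i $ j * (resid X V U mu' i j)\<^sup>2) \<le> (\<Sum>i\<in>UNIV. W $ i $ j * (resid X V U mu i j)\<^sup>2)"
    for j
    using weighted_mean_le[of UNIV "\<lambda>i. W $ i $ j" "\<lambda>i. X $ i $ j - U $ i \<bullet> V $ j" "mu $ j"] W den
    by (simp add: mu'_def UV resid_def algebra_simps)
  then show ?thesis
    unfolding wlsq_def by (subst (1 2) sum.swap) (rule sum_mono)
qed

lemma wlsq_step_le: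
  assumes adm1: "rho_adm P1" and adm2: "rho_adm P2"
    and den: "\<forall>j. 0 < (\<Sum>i\<in>UNIV. Wmat P1 P2 s1 s2 X M V U mu $ i $ j)"
    and step: "step P1 P2 s1 s2 X M (V, U, mu) = (V', U', mu')"
  shows "wlsq (Wmat P1 P2 s1 s2 X M V U mu) X V' U' mu' \<le> wlsq (Wmat P1 P2 s1 s2 X M V U mu) X V U mu"
proof -
  define W Wt where "W = Wmat P1 P2 s1 s2 X M V U mu" and "Wt = Wtmat P1 s1 X M V U mu"
  define wr where "wr i = w_fn P2 (rt P1 s1 X M V U mu i / s2)" for i
  have wr: "\<forall>i. 0 \<le> wr i"
    by (simp add: wr_def w_fn_nonneg[OF adm2])
  have Wt: "\<forall>i j. 0 \<le> Wt $ i $ j"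
    by (simp add: Wt_def Wtmat_def w_fn_nonneg[OF adm1] mind_def)
  have W_factor: "\<forall>i j. W $ i $ j = wr i * Wt $ i $ j"
    by (simp add: W_def Wt_def Wmat_def Wtmat_def wr_def)
  then have W: "\<forall>i j. 0 \<le> W $ i $ j"
    using wr Wt by simp
  have V': "V' = (\<chi> j. pinv (transpose U ** diagm (column j W) ** U)
                  *v (transpose U *v (diagm (column j W) *v (column j X - vec (mu $ j)))))"
    using step by (simp add: step_def Let_def W_def)
  have U': "U' = (\<chi> i. pinv (transpose V' ** diagm (Wt $ i) ** V')
                  *v (transpose V' *v (diagm (Wt $ i) *v (X $ i - mu))))"
    using step by (simp add: step_def Let_def W_def Wt_def V')
  have mu': "mu' = (\<chi> j. (\<Sum>i\<in>UNIV. W $ i $ j * (X $ i $ j - (U' ** transpose V') $ i $ j))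
                  / (\<Sum>i\<in>UNIV. W $ i $ j))"
    using step by (simp add: step_def Let_def W_def Wt_def V' U')
  have "wlsq W X V' U' mu' \<le> wlsq W X V' U' mu"
    unfolding mu' using W den[folded W_def] by (rule wlsq_update_mu_le)
  also have "\<dots> \<le> wlsq W X V' U mu"
    unfolding U' using Wt wr W_factor by (rule wlsq_update_U_le)
  also have "\<dots> \<le> wlsq W X V U mu"
    unfolding V' using W by (rule wlsq_update_V_le)
  finally show ?thesis
    by (simp add: W_def)
qed

theorem proposition1:
  fixes X :: "real^'p^'n" and M :: "bool^'p^'n"
    and s1 :: "real^'p" and s2 :: real
    and P1 P2 :: "real \<times> real \<times> real \<times> real"
    and V0 :: "real^'q^'p" and U0 :: "real^'q^'n" and mu0 :: "real^'p"
  assumes "CARD('q) < CARD('p)"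
    and "rho_adm P1" and "rho_adm P2"
    and "\<forall>j. s1 $ j > 0" and "s2 > 0"
    and "\<forall>i. \<exists>j. M $ i $ j"
    and "\<forall>k j. (case iterate P1 P2 s1 s2 X M (V0, U0, mu0) k of (V, U, mu) \<Rightarrow>
                  (\<Sum>i\<in>UNIV. Wmat P1 P2 s1 s2 X M V U mu $ i $ j) > 0)"
  shows "\<forall>k. (case iterate P1 P2 s1 s2 X M (V0, U0, mu0) (Suc k) of (V, U, mu) \<Rightarrow>
                objL P1 P2 s1 s2 X M V U mu)
           \<le> (case iterate P1 P2 s1 s2 X M (V0, U0, mu0) k of (V, U, mu) \<Rightarrow>
                objL P1 P2 s1 s2 X M V U mu)"
proof
  fix k
  obtain V U mu where S: "iterate P1 P2 s1 s2 X M (V0, U0, mu0) k = (V, U, mu)"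
    by (metis prod_cases3)
  obtain V' U' mu' where step: "step P1 P2 s1 s2 X M (V, U, mu) = (V', U', mu')"
    by (metis prod_cases3)
  have S': "iterate P1 P2 s1 s2 X M (V0, U0, mu0) (Suc k) = (V', U', mu')"
    using S step by (simp add: iterate_def)
  have "\<forall>j. 0 < (\<Sum>i\<in>UNIV. Wmat P1 P2 s1 s2 X M V U mu $ i $ j)"
    using assms(7) S by (metis case_prod_conv)
  then have "objL P1 P2 s1 s2 X M V' U' mu' \<le> objL P1 P2 s1 s2 X M V U mu"
    using assms(2-6) by (intro objL_le_if_wlsq_le wlsq_step_le[OF assms(2,3) _ step])
  then show "(case iterate P1 P2 s1 s2 X M (V0, U0, mu0) (Suc k) of (V, U, mu) \<Rightarrow>
                objL P1 P2 s1 s2 X M V U mu)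
           \<le> (case iterate P1 P2 s1 s2 X M (V0, U0, mu0) k of (V, U, mu) \<Rightarrow>
                objL P1 P2 s1 s2 X M V U mu)"
    by (simp add: S S')
qed

end
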